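(* Let $S$ be an infinite finitely generated cancellative semigroup that is not a group. Then $|\Omega S|=1$ or $|\Omega S|\ge\aleph_0$.
   Context: $S$ is cancellative if both $ax=ay\Rightarrow x=y$ and $xa=ya\Rightarrow x=y$ for all $a,x,y\in S$. A digraph on $\Omega$ is a subset $\Gamma\subseteq\Omega\times\Omega$. A path is a sequence of pairwise distinct vertices $(v_0,v_1,\ldots)$ with $(v_i,v_{i+1})\in\Gamma$ (length 0 allowed); a ray is an infinite path; an anti-ray is an infinite sequence of distinct vertices with $(v_{i+1},v_i)\in\Gamma$. For infinite $\Sigma',\Sigma\subseteq\Omega$, $\Sigma'\preccurlyeq\Sigma$ means there are infinitely many pairwise vertex-disjoint paths from vertices of $\Sigma'$ to vertices of $\Sigma$. On rays and anti-rays $\preccurlyeq$ is a preorder with associated equivalence $\approx$; the ends are the $\approx$-classes of rays and anti-rays, and $\Omega\Gamma$ is the poset of ends. The right Cayley graph $\Gamma_r(S,A)$ has vertex set $S$ and edges $(x,xa)$, $x\in S$, $a\in A$. For finitely generated $S$, $\Omega S:=\Omega\Gamma_r(S,A)$ for any finite generating set $A$ (well defined up to isomorphism). *)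

theory Defs
  imports Main
begin

text \<open>Semigroups are modelled as types of class semigroup_mult; S is UNIV.\<close>

definition cancellative :: "('a::semigroup_mult) itself \<Rightarrow> bool" where
  "cancellative _ \<longleftrightarrow>
     (\<forall>a x y :: 'a. a * x = a * y \<longrightarrow> x = y) \<and> (\<forall>a x y :: 'a. x * a = y * a \<longrightarrow> x = y)"

definition is_group :: "('a::semigroup_mult) itself \<Rightarrow> bool" where
  "is_group _ \<longleftrightarrow>
     (\<exists>e :: 'a. (\<forall>x. e * x = x \<and> x * e = x) \<and> (\<forall>x. \<exists>y. x * y = e \<and> y * x = e))"

inductive_set gen :: "('a::semigroup_mult) set \<Rightarrow> 'a set" for A where
  base: "a \<in> A \<Longrightarrow> a \<in> gen A"
| step: "x \<in> gen A \<Longrightarrow> a \<in> A \<Longrightarrow> x * a \<in> gen A"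

definition generates :: "('a::semigroup_mult) set \<Rightarrow> bool" where
  "generates A \<longleftrightarrow> gen A = UNIV"

definition finitely_generated :: "('a::semigroup_mult) itself \<Rightarrow> bool" where
  "finitely_generated _ \<longleftrightarrow> (\<exists>A :: 'a set. finite A \<and> generates A)"

definition cayley_r :: "('a::semigroup_mult) set \<Rightarrow> ('a \<times> 'a) set" where
  "cayley_r A = {(x, x * a) | x a. a \<in> A}"

definition is_path :: "('v \<times> 'v) set \<Rightarrow> 'v list \<Rightarrow> bool" where
  "is_path G p \<longleftrightarrow> p \<noteq> [] \<and> distinct p \<and> (\<forall>i. Suc i < length p \<longrightarrow> (p ! i, p ! Suc i) \<in> G)"

definition is_ray :: "('v \<times> 'v) set \<Rightarrow> (nat \<Rightarrow> 'v) \<Rightarrow> bool" where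
  "is_ray G r \<longleftrightarrow> inj r \<and> (\<forall>i. (r i, r (Suc i)) \<in> G)"

definition is_antiray :: "('v \<times> 'v) set \<Rightarrow> (nat \<Rightarrow> 'v) \<Rightarrow> bool" where
  "is_antiray G r \<longleftrightarrow> inj r \<and> (\<forall>i. (r (Suc i), r i) \<in> G)"

definition reach_le :: "('v \<times> 'v) set \<Rightarrow> 'v set \<Rightarrow> 'v set \<Rightarrow> bool" where
  "reach_le G S' S \<longleftrightarrow>
     (\<exists>P. infinite P \<and>
          (\<forall>p\<in>P. is_path G p \<and> hd p \<in> S' \<and> last p \<in> S) \<and>
          (\<forall>p\<in>P. \<forall>q\<in>P. p \<noteq> q \<longrightarrow> set p \<inter> set q = {}))"

definition rays_antirays :: "('v \<times> 'v) set \<Rightarrow> (nat \<Rightarrow> 'v) set" where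
  "rays_antirays G = {r. is_ray G r \<or> is_antiray G r}"

definition end_equiv :: "('v \<times> 'v) set \<Rightarrow> (nat \<Rightarrow> 'v) \<Rightarrow> (nat \<Rightarrow> 'v) \<Rightarrow> bool" where
  "end_equiv G r s \<longleftrightarrow> reach_le G (range r) (range s) \<and> reach_le G (range s) (range r)"

definition ends :: "('v \<times> 'v) set \<Rightarrow> (nat \<Rightarrow> 'v) set set" where
  "ends G = (\<lambda>r. {s \<in> rays_antirays G. end_equiv G r s}) ` rays_antirays G"

end

theory Submission
  imports Defs
begin

(* A cancellative semigroup S, generated by A, that is not a group has a generator a whose
   left translation x \<mapsto> a x is not surjective.  Its powers a, a^2, a^3, ... form a ray of the
   right Cayley graph, so there is at least one end.  We show: if there are only finitely many
   ends, then any two rays or anti-rays are equivalent, hence there is exactly one end.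

   The right ideals v^n S are closed under Cayley edges.  If the ends are finite, then among
   the translates v^n r (n = 0, 1, ...) of a ray or anti-ray r two are equivalent; a path
   from v^j r to v^i r (i < j) stays in v^j S, and cancelling v^i shows that r meets vS.
   Applied to the ray of powers of a, this forces the chain a S \<supseteq> a^2 S \<supseteq> ... to have
   empty intersection, so every finite vertex set U misses some a^N S.  Given rays or
   anti-rays r, r', pick r i \<in> a^N S and then r' j \<in> (r i) S; a Cayley path from r i to r' j
   lies in a^N S and thus avoids U.  Paths avoiding arbitrary finite sets can be chosen
   greedily to be pairwise disjoint, which gives r \<preccurlyeq> r'. *)


section \<open>Cancellative semigroups\<close>

lemma cancel_left:
  assumes "cancellative TYPE('a::semigroup_mult)" and "(a::'a) * x = a * y"
  shows "x = y"
  using assms unfolding cancellative_def by blast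

lemma cancel_right:
  assumes "cancellative TYPE('a::semigroup_mult)" and "x * (a::'a) = y * a"
  shows "x = y"
  using assms unfolding cancellative_def by blast

lemma right_unit_is_identity:
  assumes c: "cancellative TYPE('a::semigroup_mult)" and pt: "(p::'a) * t = p"
  shows "t * x = x" and "x * t = x"
proof -
  have "p * (t * t) = p * t" by (metis pt mult.assoc)
  then have tt: "t * t = t" using cancel_left[OF c] by blast
  have "t * (t * x) = t * x" by (metis tt mult.assoc)
  then show "t * x = x" using cancel_left[OF c] by blast
  have "(x * t) * t = x * t" by (metis tt mult.assoc)
  then show "x * t = x" using cancel_right[OF c] by blast
qed

lemma surj_left_translations_group:
  assumes c: "cancellative TYPE('a::semigroup_mult)" and surj: "\<And>x::'a. surj ((*) x)"
  shows "is_group TYPE('a)"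
proof -
  obtain e :: 'a where "undefined * e = undefined" using surj by (metis surjD)
  then have e: "e * x = x" "x * e = x" for x using right_unit_is_identity[OF c] by blast+
  have "\<exists>y. x * y = e \<and> y * x = e" for x
  proof -
    obtain y where y: "x * y = e" using surj by (metis surjD)
    have "x * (y * x) = x * e" by (simp add: mult.assoc[symmetric] y e)
    then show ?thesis using y cancel_left[OF c] by blast
  qed
  then show ?thesis unfolding is_group_def using e by blast
qed

lemma surj_left_translation_gen:
  assumes "\<And>a. a \<in> A \<Longrightarrow> surj ((*) a)" and "x \<in> gen A"
  shows "surj ((*) (x::'a::semigroup_mult))"
  using assms(2)
proof (induction rule: gen.induct)
  case (base a) then show ?case by (rule assms(1))
next
  case (step x a)
  have "surj ((*) x \<circ> (*) a)" using comp_surj[OF assms(1)[OF step.hyps(2)] step.IH] .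
  moreover have "(*) x \<circ> (*) a = (*) (x * a)" by (auto simp: mult.assoc)
  ultimately show ?case by simp
qed

lemma non_group_nonsurjective_generator:
  assumes "cancellative TYPE('a::semigroup_mult)" and "\<not> is_group TYPE('a)"
    and "generates (A::'a set)"
  shows "\<exists>a\<in>A. \<not> surj ((*) a)"
proof (rule ccontr)
  assume "\<not> ?thesis"
  then have "surj ((*) x)" for x :: 'a
    using surj_left_translation_gen[of A x] assms(3) unfolding generates_def by blast
  then show False using surj_left_translations_group assms(1,2) by blast
qed


section \<open>Iterated left translations\<close>

text \<open>The map \<open>(*) v ^^ n\<close> is left multiplication by \<open>v\<^sup>n\<close>; its range is the right ideal \<open>v\<^sup>n S\<close>.\<close>

lemma funpow_left_mult_assoc:
  "((*) v ^^ n) x * b = ((*) v ^^ n) (x * (b::'a::semigroup_mult))"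
  by (induction n) (simp_all add: mult.assoc)

lemma funpow_left_mult_self:
  "((*) v ^^ n) v * z = v * ((*) v ^^ n) (z::'a::semigroup_mult)"
  by (simp add: funpow_left_mult_assoc funpow_swap1)

lemma inj_funpow_left_mult:
  assumes "cancellative TYPE('a::semigroup_mult)"
  shows "inj ((*) (v::'a) ^^ n)"
  using cancel_left[OF assms] by (intro inj_fn) (auto intro: injI)

lemma funpow_left_mult_cancel:
  assumes "cancellative TYPE('a::semigroup_mult)"
    and "((*) v ^^ i) x = ((*) v ^^ (i + d)) (y::'a)"
  shows "x = ((*) v ^^ d) y"
  using assms(2) inj_funpow_left_mult[OF assms(1), where v=v and n=i] by (simp add: funpow_add injD)

lemma funpow_left_mult_range_mono:
  "m \<le> n \<Longrightarrow> range ((*) v ^^ n) \<subseteq> range ((*) (v::'a::semigroup_mult) ^^ m)"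
  by (auto simp: funpow_add dest!: le_Suc_ex)

text \<open>This is what keeps the powers of a non-surjective
  generator apart.\<close>

lemma right_unit_surj:
  assumes c: "cancellative TYPE('a::semigroup_mult)" and "(a::'a) * t = a"
    and "\<And>z. t * z \<in> range ((*) a)"
  shows "surj ((*) a)"
proof -
  have "z \<in> range ((*) a)" for z
    using assms(3)[of z] right_unit_is_identity(1)[OF c assms(2), of z] by simp
  then show ?thesis by blast
qed


section \<open>Paths, rays and ends in a digraph\<close>

lemma is_path_take:
  assumes "is_path G p" and "k < length p"
  shows "is_path G (take (Suc k) p)"
  using assms unfolding is_path_def by auto

lemma is_path_snoc:
  assumes p: "is_path G p" and "z \<notin> set p" and e: "(last p, z) \<in> G"
  shows "is_path G (p @ [z])"
  unfolding is_path_def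
proof (intro conjI allI impI)
  show "p @ [z] \<noteq> []" by simp
  show "distinct (p @ [z])" using assms by (simp add: is_path_def)
  fix i assume i: "Suc i < length (p @ [z])"
  show "((p @ [z]) ! i, (p @ [z]) ! Suc i) \<in> G"
  proof (cases "Suc i < length p")
    case True then show ?thesis using p by (simp add: nth_append is_path_def)
  next
    case False
    then have "i = length p - 1" and "p \<noteq> []" using i p by (auto simp: is_path_def)
    then show ?thesis using e by (simp add: nth_append last_conv_nth)
  qed
qed

text \<open>Reachability is witnessed by a path: a walk with a repeated vertex is shortcut.\<close>

lemma rtrancl_path:
  assumes "(u, w) \<in> G\<^sup>*"
  shows "\<exists>p. is_path G p \<and> hd p = u \<and> last p = w"
  using assms
proof (induction rule: rtrancl_induct)
  case base
  show ?case by (intro exI[of _ "[u]"]) (simp add: is_path_def)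
next
  case (step y z)
  then obtain p where p: "is_path G p" "hd p = u" "last p = y" by blast
  then have "p \<noteq> []" by (simp add: is_path_def)
  show ?case
  proof (cases "z \<in> set p")
    case True
    then obtain k where k: "k < length p" "p ! k = z" by (auto simp: in_set_conv_nth)
    have "last (take (Suc k) p) = z"
      using k \<open>p \<noteq> []\<close> by (simp add: last_conv_nth min_absorb2)
    then show ?thesis using is_path_take[OF p(1) k(1)] p(2) by auto
  next
    case False
    then show ?thesis using is_path_snoc[OF p(1) False] step.hyps(2) p(2,3) \<open>p \<noteq> []\<close> by auto
  qed
qed

lemma path_in_closed_set:
  assumes p: "is_path G p" and "hd p \<in> X" and cl: "\<And>x y. x \<in> X \<Longrightarrow> (x, y) \<in> G \<Longrightarrow> y \<in> X"
  shows "set p \<subseteq> X"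
proof -
  have "p ! i \<in> X" if "i < length p" for i
    using that
  proof (induction i)
    case 0 then show ?case using assms(2) p by (simp add: is_path_def hd_conv_nth)
  next
    case (Suc i)
    then show ?case using cl p unfolding is_path_def by auto
  qed
  then show ?thesis by (auto simp: in_set_conv_nth)
qed

text \<open>Every ray or anti-ray is \<open>\<preccurlyeq>\<close> itself, via its one-vertex paths.\<close>

lemma reach_le_refl:
  assumes "inj (u :: nat \<Rightarrow> 'v)"
  shows "reach_le G (range u) (range u)"
  unfolding reach_le_def
proof (intro exI[of _ "range (\<lambda>k. [u k])"] conjI)
  have "inj (\<lambda>k. [u k])" using assms by (simp add: inj_def)
  then show "infinite (range (\<lambda>k. [u k]))" by (simp add: finite_image_iff)
qed (auto simp: is_path_def)

lemma reach_le_path: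
  assumes "reach_le G S' S"
  shows "\<exists>p. is_path G p \<and> hd p \<in> S' \<and> last p \<in> S"
proof -
  obtain P where "infinite P" "\<forall>p\<in>P. is_path G p \<and> hd p \<in> S' \<and> last p \<in> S"
    using assms unfolding reach_le_def by blast
  then show ?thesis by (metis finite.emptyI ex_in_conv)
qed

text \<open>If paths from \<open>S'\<close> to \<open>S\<close> can avoid any finite vertex set, then infinitely many
  pairwise disjoint ones can be chosen greedily, each avoiding the vertices of its predecessors.\<close>

lemma reach_le_if_avoiding:
  assumes ex: "\<And>U. finite U \<Longrightarrow> \<exists>p. is_path G p \<and> hd p \<in> S' \<and> last p \<in> S \<and> set p \<inter> U = {}"
  shows "reach_le G S' S"
proof -
  let ?Q = "\<lambda>p. is_path G p \<and> hd p \<in> S' \<and> last p \<in> S"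
  define choice where "choice U = (SOME p. ?Q p \<and> set p \<inter> U = {})" for U
  have choice: "?Q (choice U) \<and> set (choice U) \<inter> U = {}" if "finite U" for U
    unfolding choice_def using someI_ex[OF ex[OF that]] by (simp only: conj_assoc)
  define used where "used = rec_nat {} (\<lambda>_ U. U \<union> set (choice U))"
  define pth where "pth n = choice (used n)" for n
  have used_Suc: "used (Suc n) = used n \<union> set (pth n)" for n
    unfolding used_def pth_def by simp
  have finite_used: "finite (used n)" for n
    by (induction n) (simp_all add: used_def)
  have good: "?Q (pth n) \<and> set (pth n) \<inter> used n = {}" for n
    unfolding pth_def by (rule choice[OF finite_used])
  have earlier: "set (pth m) \<subseteq> used n" if "m < n" for m n
    using that by (induction n) (auto simp: used_Suc less_Suc_eq)
  have disj: "set (pth m) \<inter> set (pth n) = {}" if "m \<noteq> n" for m n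
  proof (cases "m < n")
    case True
    then show ?thesis using earlier good[of n] by blast
  next
    case False
    then have "n < m" using that by simp
    then show ?thesis using earlier good[of m] by blast
  qed
  have "inj pth"
  proof (rule injI, rule ccontr)
    fix m n assume "pth m = pth n" "m \<noteq> n"
    then have "set (pth n) = {}" using disj[of m n] by simp
    then show False using good[of n] unfolding is_path_def by simp
  qed
  then have "infinite (range pth)" by (simp add: finite_image_iff)
  moreover have "\<forall>p\<in>range pth. ?Q p" using good by blast
  moreover have "\<forall>p\<in>range pth. \<forall>q\<in>range pth. p \<noteq> q \<longrightarrow> set p \<inter> set q = {}"
  proof (intro ballI impI)
    fix p q assume "p \<in> range pth" "q \<in> range pth" "p \<noteq> q"
    moreover obtain m where "p = pth m" using \<open>p \<in> range pth\<close> by (rule rangeE)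
    moreover obtain n where "q = pth n" using \<open>q \<in> range pth\<close> by (rule rangeE)
    ultimately show "set p \<inter> set q = {}" using disj[of m n] by auto
  qed
  ultimately show ?thesis unfolding reach_le_def by blast
qed

lemma rays_antirays_inj: "r \<in> rays_antirays G \<Longrightarrow> inj r"
  unfolding rays_antirays_def is_ray_def is_antiray_def by blast

lemma rays_antirays_image:
  assumes "inj f" and "\<And>x y. (x, y) \<in> G \<Longrightarrow> (f x, f y) \<in> G" and "r \<in> rays_antirays G"
  shows "(\<lambda>k. f (r k)) \<in> rays_antirays G"
proof -
  have "inj (\<lambda>k. f (r k))"
    using assms(1) rays_antirays_inj[OF assms(3)] by (simp add: inj_def)
  then show ?thesis
    using assms(2,3) unfolding rays_antirays_def is_ray_def is_antiray_def by blast
qed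

lemma finite_ends_equivalent_pair:
  fixes T :: "nat \<Rightarrow> nat \<Rightarrow> 'v"
  assumes fin: "finite (ends G)" and T: "\<And>n. T n \<in> rays_antirays G"
  shows "\<exists>i j. i < j \<and> end_equiv G (T i) (T j)"
proof -
  define cls where "cls r = {s \<in> rays_antirays G. end_equiv G r s}" for r
  have "cls (T n) \<in> ends G" for n
    unfolding ends_def cls_def by (rule imageI[OF T])
  then have "range (\<lambda>n. cls (T n)) \<subseteq> ends G" by blast
  then have fin_range: "finite (range (\<lambda>n. cls (T n)))" using fin by (rule finite_subset)
  have "\<not> inj (\<lambda>n. cls (T n))"
  proof
    assume "inj (\<lambda>n. cls (T n))"
    then show False using fin_range by (simp add: finite_image_iff)
  qed
  then obtain i j where ij: "i \<noteq> j" "cls (T i) = cls (T j)" unfolding inj_def by blast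
  have "end_equiv G (T j) (T j)"
    unfolding end_equiv_def using reach_le_refl[OF rays_antirays_inj[OF T]] by blast
  then have "T j \<in> cls (T j)" unfolding cls_def using T by blast
  then have equiv: "end_equiv G (T i) (T j)" using ij(2) unfolding cls_def by blast
  show ?thesis
  proof (cases "i < j")
    case True then show ?thesis using equiv by blast
  next
    case False
    then have "j < i" using ij(1) by simp
    moreover have "end_equiv G (T j) (T i)" using equiv unfolding end_equiv_def by blast
    ultimately show ?thesis by blast
  qed
qed

lemma ends_singleton:
  assumes "r0 \<in> rays_antirays G"
    and "\<And>r s. r \<in> rays_antirays G \<Longrightarrow> s \<in> rays_antirays G \<Longrightarrow> end_equiv G r s"
  shows "ends G = {rays_antirays G}"
  using assms unfolding ends_def by blast


section \<open>The right Cayley graph\<close>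

lemma cayley_r_edge: "(x, y) \<in> cayley_r A \<longleftrightarrow> (\<exists>b\<in>A. y = x * b)"
  unfolding cayley_r_def by auto

lemma cayley_r_reach_gen:
  assumes "y \<in> gen A"
  shows "(x, x * y) \<in> (cayley_r A)\<^sup>*"
  using assms
proof (induction rule: gen.induct)
  case (base b)
  then have "(x, x * b) \<in> cayley_r A" by (auto simp: cayley_r_edge)
  then show ?case by (rule r_into_rtrancl)
next
  case (step y b)
  have "(x * y, x * (y * b)) \<in> cayley_r A"
    using step.hyps(2) by (auto simp: cayley_r_edge mult.assoc)
  with step.IH show ?case by (rule rtrancl_into_rtrancl)
qed

lemma cayley_r_ideal_closed:
  assumes "x \<in> range ((*) v ^^ n)" and "(x, y) \<in> cayley_r A"
  shows "y \<in> range ((*) v ^^ n)"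
  using assms by (auto simp: cayley_r_edge funpow_left_mult_assoc)

text \<open>Left translations are graph embeddings, so they act on rays and anti-rays.\<close>

lemma cayley_r_translate:
  assumes "cancellative TYPE('a::semigroup_mult)" and "r \<in> rays_antirays (cayley_r (A::'a set))"
  shows "(\<lambda>k. ((*) v ^^ n) (r k)) \<in> rays_antirays (cayley_r A)"
  by (rule rays_antirays_image[OF inj_funpow_left_mult[OF assms(1)] _ assms(2)])
    (auto simp: cayley_r_edge funpow_left_mult_assoc)

lemma power_ray:
  assumes c: "cancellative TYPE('a::semigroup_mult)" and a: "(a::'a) \<in> A"
    and ns: "\<not> surj ((*) a)"
  shows "(\<lambda>n. ((*) a ^^ n) a) \<in> rays_antirays (cayley_r A)"
proof -
  have distinct: "((*) a ^^ i) a \<noteq> ((*) a ^^ (i + Suc d)) a" for i d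
  proof
    assume "((*) a ^^ i) a = ((*) a ^^ (i + Suc d)) a"
    then have "a = ((*) a ^^ Suc d) a" by (rule funpow_left_mult_cancel[OF c])
    then have unit: "a * ((*) a ^^ d) a = a" by simp
    have "((*) a ^^ d) a * z \<in> range ((*) a)" for z by (simp add: funpow_left_mult_self)
    then have "surj ((*) a)" by (rule right_unit_surj[OF c unit])
    with ns show False ..
  qed
  have "inj (\<lambda>n. ((*) a ^^ n) a)"
  proof (rule injI, rule ccontr)
    fix i j assume eq: "((*) a ^^ i) a = ((*) a ^^ j) a" and "i \<noteq> j"
    then consider "i < j" | "j < i" by linarith
    then show False
    proof cases
      case 1
      then obtain d where "j = i + Suc d" using less_imp_Suc_add by fastforce
      then show False using distinct eq by blast
    next
      case 2
      then obtain d where "i = j + Suc d" using less_imp_Suc_add by fastforce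
      then show False using distinct eq by metis
    qed
  qed
  moreover have "(((*) a ^^ n) a, ((*) a ^^ Suc n) a) \<in> cayley_r A" for n
  proof -
    have "((*) a ^^ Suc n) a = ((*) a ^^ n) a * a"
      by (simp only: funpow.simps(2) comp_apply funpow_swap1 funpow_left_mult_assoc)
    then show ?thesis using a by (auto simp: cayley_r_edge)
  qed
  ultimately show ?thesis unfolding rays_antirays_def is_ray_def by auto
qed


section \<open>Finitely many ends force a single end\<close>

text \<open>With finitely many ends, every ray or anti-ray meets every principal right ideal
  \<open>vS\<close>: two translates \<open>v\<^sup>i r\<close>, \<open>v\<^sup>j r\<close> with \<open>i < j\<close> are equivalent, and a path from the
  second to the first stays in \<open>v\<^sup>j S\<close>.\<close>

lemma finite_ends_ray_meets_ideal:
  assumes c: "cancellative TYPE('a::semigroup_mult)"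
    and fin: "finite (ends (cayley_r (A::'a set)))" and r: "r \<in> rays_antirays (cayley_r A)"
  shows "\<exists>k. r k \<in> range ((*) (v::'a))"
proof -
  let ?G = "cayley_r A"
  define T where "T n = (\<lambda>k. ((*) v ^^ n) (r k))" for n
  have "T n \<in> rays_antirays ?G" for n unfolding T_def by (rule cayley_r_translate[OF c r])
  then have "\<exists>i j. i < j \<and> end_equiv ?G (T i) (T j)" by (rule finite_ends_equivalent_pair[OF fin])
  then obtain i j where ij: "i < j" "reach_le ?G (range (T j)) (range (T i))"
    unfolding end_equiv_def by blast
  obtain p where p: "is_path ?G p" "hd p \<in> range (T j)" "last p \<in> range (T i)"
    using reach_le_path[OF ij(2)] by blast
  have "hd p \<in> range ((*) v ^^ j)" using p(2) unfolding T_def by auto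
  then have "set p \<subseteq> range ((*) v ^^ j)"
    by (rule path_in_closed_set[OF p(1) _ cayley_r_ideal_closed])
  moreover have "last p \<in> set p" using p(1) by (simp add: is_path_def)
  ultimately obtain w where w: "last p = ((*) v ^^ j) w" by blast
  obtain k where k: "last p = ((*) v ^^ i) (r k)" using p(3) unfolding T_def by auto
  obtain d where "j = i + Suc d" using less_imp_Suc_add[OF ij(1)] by auto
  then have "((*) v ^^ i) (r k) = ((*) v ^^ (i + Suc d)) w" using k w by simp
  then have "r k = ((*) v ^^ Suc d) w" by (rule funpow_left_mult_cancel[OF c])
  then show ?thesis by auto
qed

text \<open>Hence the chain \<open>aS \<supseteq> a\<^sup>2S \<supseteq> \<dots>\<close> has empty intersection when \<open>a\<close> is not surjective:
  if \<open>x\<close> lay in all \<open>a\<^sup>nS\<close>, the point where the ray of powers meets \<open>xS\<close> would give a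
  right unit of \<open>a\<close> inside \<open>aS\<close>.\<close>

lemma finite_ends_ideal_chain:
  assumes c: "cancellative TYPE('a::semigroup_mult)"
    and fin: "finite (ends (cayley_r (A::'a set)))" and a: "a \<in> A" and ns: "\<not> surj ((*) a)"
  shows "\<exists>n. (x::'a) \<notin> range ((*) a ^^ n)"
proof -
  obtain k y where k: "((*) a ^^ k) a = x * y"
    using finite_ends_ray_meets_ideal[OF c fin power_ray[OF c a ns], of x] by blast
  have "x \<notin> range ((*) a ^^ (k + 2))"
  proof
    assume "x \<in> range ((*) a ^^ (k + 2))"
    then obtain w where w: "x = ((*) a ^^ (k + 2)) w" by blast
    have "((*) a ^^ k) a = ((*) a ^^ (k + 2)) (w * y)"
      by (simp only: k w funpow_left_mult_assoc)
    then have "a = ((*) a ^^ 2) (w * y)" by (rule funpow_left_mult_cancel[OF c])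
    then have unit: "a * (a * (w * y)) = a" by (simp add: numeral_2_eq_2)
    have "a * (w * y) * z \<in> range ((*) a)" for z by (simp add: mult.assoc)
    then have "surj ((*) a)" by (rule right_unit_surj[OF c unit])
    with ns show False ..
  qed
  then show ?thesis by blast
qed

text \<open>Since the ideals \<open>a\<^sup>nS\<close> decrease, every finite vertex set misses one of them.\<close>

lemma finite_ends_avoid_ideal:
  assumes c: "cancellative TYPE('a::semigroup_mult)"
    and fin: "finite (ends (cayley_r (A::'a set)))" and a: "a \<in> A" and ns: "\<not> surj ((*) a)"
    and U: "finite U"
  shows "\<exists>N. U \<inter> range ((*) a ^^ N) = {}"
proof -
  obtain depth where depth: "\<And>u. u \<notin> range ((*) a ^^ depth u)"
    using finite_ends_ideal_chain[OF c fin a ns] by metis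
  define N where "N = Max (insert 0 (depth ` U))"
  have "u \<notin> range ((*) a ^^ N)" if "u \<in> U" for u
  proof -
    have "depth u \<le> N" unfolding N_def using U that by simp
    then show ?thesis using depth[of u] funpow_left_mult_range_mono by blast
  qed
  then show ?thesis by blast
qed

text \<open>To avoid a finite set \<open>U \<subseteq> S \<setminus> a\<^sup>NS\<close>, go from a vertex \<open>r i \<in> a\<^sup>NS\<close> to a
  vertex \<open>r' j \<in> (r i)S\<close> inside the right ideal \<open>a\<^sup>NS\<close>.\<close>

lemma finite_ends_reach_le:
  assumes c: "cancellative TYPE('a::semigroup_mult)"
    and fin: "finite (ends (cayley_r (A::'a set)))" and a: "a \<in> A" and ns: "\<not> surj ((*) a)"
    and g: "generates A"
    and r: "r \<in> rays_antirays (cayley_r A)" and r': "r' \<in> rays_antirays (cayley_r A)"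
  shows "reach_le (cayley_r A) (range r) (range r')"
proof (rule reach_le_if_avoiding)
  fix U :: "'a set" assume "finite U"
  then obtain N where N: "U \<inter> range ((*) a ^^ N) = {}"
    using finite_ends_avoid_ideal[OF c fin a ns] by blast
  obtain i where "r i \<in> range ((*) (((*) a ^^ N) a))"
    using finite_ends_ray_meets_ideal[OF c fin r, where v = "((*) a ^^ N) a"] by blast
  then have ri: "r i \<in> range ((*) a ^^ N)" by (auto simp: funpow_left_mult_assoc)
  obtain j y where j: "r' j = r i * y"
    using finite_ends_ray_meets_ideal[OF c fin r', where v = "r i"] by blast
  have "y \<in> gen A" using g unfolding generates_def by simp
  then have "(r i, r' j) \<in> (cayley_r A)\<^sup>*" unfolding j by (rule cayley_r_reach_gen)
  then obtain p where p: "is_path (cayley_r A) p" "hd p = r i" "last p = r' j"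
    using rtrancl_path by metis
  have "hd p \<in> range ((*) a ^^ N)" using p(2) ri by simp
  then have "set p \<subseteq> range ((*) a ^^ N)"
    by (rule path_in_closed_set[OF p(1) _ cayley_r_ideal_closed])
  then have "set p \<inter> U = {}" using N by blast
  moreover have "hd p \<in> range r" "last p \<in> range r'" using p(2,3) by simp_all
  ultimately show "\<exists>p. is_path (cayley_r A) p \<and> hd p \<in> range r \<and> last p \<in> range r' \<and> set p \<inter> U = {}"
    using p(1) by blast
qed


theorem mainTheorem13:
  fixes A :: "('a::semigroup_mult) set"
  assumes "infinite (UNIV :: 'a set)"
    and "cancellative TYPE('a)"
    and "\<not> is_group TYPE('a)"
    and "finite A" and "generates A"
  shows "card (ends (cayley_r A)) = 1 \<or> infinite (ends (cayley_r A))"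
proof (cases "finite (ends (cayley_r A))")
  case False
  then show ?thesis by blast
next
  case fin: True
  obtain a where a: "a \<in> A" "\<not> surj ((*) a)"
    using non_group_nonsurjective_generator[OF assms(2,3,5)] by blast
  have "ends (cayley_r A) = {rays_antirays (cayley_r A)}"
  proof (rule ends_singleton)
    show "(\<lambda>n. ((*) a ^^ n) a) \<in> rays_antirays (cayley_r A)"
      by (rule power_ray[OF assms(2) a])
    fix r s assume "r \<in> rays_antirays (cayley_r A)" "s \<in> rays_antirays (cayley_r A)"
    then show "end_equiv (cayley_r A) r s"
      unfolding end_equiv_def using finite_ends_reach_le[OF assms(2) fin a assms(5)] by simp
  qed
  then show ?thesis by simp
qed

end
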